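(* For every integer $n\ge 0$ and every integer $j$ with $0\le j\le n/3$, the number $f(n,j)$ of partitions of $n$ whose parts of even index sum to $j$ equals $$\sum_{i=0}^{j} p(i)\,p(j-i),$$ where $p$ is the partition function. (This is the $(j+1)$-st term of Sloane's sequence A000712, the number of ordered pairs $(\alpha,\beta)$ of integer partitions with $|\alpha|+|\beta|=j$.) Moreover, the bound $n/3$ is best possible: for every integer $j$ with $n/3<j\le n/2$, $f(n,j)<\sum_{i=0}^{j}p(i)p(j-i)$.
   Context: A partition $\lambda$ of $n$ is written $n=a_1+a_2+\dots+a_k$ with $a_1\ge a_2\ge\dots\ge a_k\ge1$. The parts of even index are $a_2,a_4,a_6,\dots$ and the parts of odd index are $a_1,a_3,\dots$. $f(n,j)$ denotes the number of partitions of $n$ with $a_2+a_4+a_6+\dots=j$. $p(i)$ is the number of partitions of $i$, with $p(0)=1$. *)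

theory Defs
  imports Main
begin

definition partitions :: "nat \<Rightarrow> nat list set" where
  "partitions n = {xs. sorted_wrt (\<ge>) xs \<and> (\<forall>x\<in>set xs. 1 \<le> x) \<and> sum_list xs = n}"

definition part_count :: "nat \<Rightarrow> nat" where
  "part_count i = card (partitions i)"

text \<open>Sum of parts of even index a_2 + a_4 + ...; with 0-based list positions these are
  the positions 1, 3, 5, ...\<close>
definition even_index_sum :: "nat list \<Rightarrow> nat" where
  "even_index_sum xs = (\<Sum>i<length xs. if odd i then xs ! i else 0)"

definition f :: "nat \<Rightarrow> nat \<Rightarrow> nat" where
  "f n j = card {xs \<in> partitions n. even_index_sum xs = j}"

end

theory Submission
  imports Defs "HOL-Library.More_List"
begin

(* Read a partition as an antitone sequence a_0 >= a_1 >= ... >= 0, so that its parts of even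
  index are a_1, a_3, ...  Every such sequence vanishing from some point on is uniquely of the
  form a_i = T_i + T_(i+1) with T eventually zero, and a is antitone iff T_(i+2) <= T_i for all i,
  i.e. iff alpha = (T_1, T_3, ...) and beta = (T_2, T_4, ...) are partitions and beta_0 <= T_0.
  In these coordinates j = |alpha| + |beta| and n = T_0 + 2j, so f(n,j) counts the pairs of
  partitions of total size j whose second member has largest part at most n - 2j.  That bound
  is vacuous when 3j <= n, and it excludes beta = (j) when j > n - 2j. *)

definition partition_seqs :: "nat \<Rightarrow> nat \<Rightarrow> (nat \<Rightarrow> nat) set" where
  "partition_seqs M s = {a. antimono a \<and> (\<forall>i\<ge>M. a i = 0) \<and> (\<Sum>i<M. a i) = s}"

lemma length_le_sum_list_if_pos:
  "\<forall>x\<in>set xs. 1 \<le> x \<Longrightarrow> length xs \<le> sum_list (xs :: nat list)"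
  by (induction xs) auto

lemma partitions_length_le: "xs \<in> partitions s \<Longrightarrow> length xs \<le> s"
  using length_le_sum_list_if_pos by (fastforce simp: partitions_def)

lemma finite_partitions: "finite (partitions s)"
proof (rule finite_subset)
  show "partitions s \<subseteq> {xs. set xs \<subseteq> {..s} \<and> length xs \<le> s}"
    using member_le_sum_list partitions_length_le by (fastforce simp: partitions_def)
  show "finite {xs. set xs \<subseteq> {..s} \<and> length xs \<le> s}"
    by (rule finite_lists_length_le) simp
qed

lemma sum_nth_default_eq_sum_list:
  assumes "length xs \<le> M"
  shows "(\<Sum>i<M. nth_default 0 xs i) = sum_list xs"
proof -
  have "(\<Sum>i<M. nth_default 0 xs i) = (\<Sum>i<length xs. xs ! i)"
    using assms by (intro sum.mono_neutral_cong_right) (auto simp: nth_default_def)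
  also have "\<dots> = sum_list xs"
    by (simp add: sum_list_sum_nth atLeast0LessThan)
  finally show ?thesis .
qed

lemma even_index_sum_nth_default:
  assumes "length xs \<le> M"
  shows "even_index_sum xs = (\<Sum>i<M. if odd i then nth_default 0 xs i else 0)"
  unfolding even_index_sum_def
  using assms by (intro sum.mono_neutral_cong_left) (auto simp: nth_default_def)

lemma length_eq_card_nth_default_nonzero:
  assumes "0 \<notin> set xs"
  shows "length xs = card {i. nth_default 0 xs i \<noteq> (0::nat)}"
proof -
  have "{i. nth_default 0 xs i \<noteq> 0} = {..<length xs}"
    using assms by (auto simp: nth_default_def in_set_conv_nth)
  then show ?thesis by simp
qed

lemma partitions_zero_notin: "xs \<in> partitions s \<Longrightarrow> 0 \<notin> set xs"
  by (fastforce simp: partitions_def)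

lemma inj_on_nth_default_partitions: "inj_on (nth_default 0) (partitions s)"
proof (rule inj_onI)
  fix xs ys assume "xs \<in> partitions s" "ys \<in> partitions s" and eq: "nth_default 0 xs = nth_default 0 ys"
  then have "length xs = length ys"
    by (simp add: partitions_zero_notin length_eq_card_nth_default_nonzero)
  then show "xs = ys"
    by (metis eq map_nth_default)
qed

lemma antimono_vanishing_prefix:
  fixes a :: "nat \<Rightarrow> nat"
  assumes "antimono a" "a M = 0"
  obtains k where "k \<le> M" "\<forall>i<k. a i \<noteq> 0" "\<forall>i\<ge>k. a i = 0"
proof
  let ?k = "LEAST i. a i = 0"
  show "?k \<le> M" using assms(2) by (rule Least_le)
  show "\<forall>i<?k. a i \<noteq> 0" using not_less_Least by blast
  have "a ?k = 0" using assms(2) by (rule LeastI)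
  then show "\<forall>i\<ge>?k. a i = 0" using assms(1) by (metis antimonoD le_zero_eq)
qed

lemma nth_default_partitions_eq:
  assumes "s \<le> M"
  shows "nth_default 0 ` partitions s = partition_seqs M s"
proof
  show "nth_default 0 ` partitions s \<subseteq> partition_seqs M s"
  proof clarify
    fix xs assume xs: "xs \<in> partitions s"
    then have "length xs \<le> M" using assms partitions_length_le by fastforce
    moreover have "antimono (nth_default 0 xs)"
      using xs by (auto simp: antimono_iff_le_Suc partitions_def nth_default_def sorted_wrt_iff_nth_less)
    ultimately show "nth_default 0 xs \<in> partition_seqs M s"
      using xs by (simp add: partition_seqs_def partitions_def sum_nth_default_eq_sum_list nth_default_beyond)
  qed
  show "partition_seqs M s \<subseteq> nth_default 0 ` partitions s"
  proof
    fix a assume a: "a \<in> partition_seqs M s"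
    then have "antimono a" "a M = 0" by (auto simp: partition_seqs_def)
    then obtain k where k: "k \<le> M" "\<forall>i<k. a i \<noteq> 0" "\<forall>i\<ge>k. a i = 0"
      by (rule antimono_vanishing_prefix)
    define xs where "xs = map a [0..<k]"
    have a_eq: "nth_default 0 xs = a"
      using k by (auto simp: xs_def nth_default_def)
    have "sorted_wrt (\<ge>) xs"
      using \<open>antimono a\<close> by (auto simp: xs_def sorted_wrt_iff_nth_less antimonoD)
    moreover have "\<forall>x\<in>set xs. 1 \<le> x"
      using k by (auto simp: xs_def Suc_le_eq)
    moreover have "sum_list xs = s"
      using a k sum_nth_default_eq_sum_list[of xs M] a_eq by (simp add: partition_seqs_def xs_def)
    ultimately have "xs \<in> partitions s"
      by (simp add: partitions_def)
    with a_eq show "a \<in> nth_default 0 ` partitions s" by blast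
  qed
qed

lemma bij_betw_nth_default_partitions:
  "s \<le> M \<Longrightarrow> bij_betw (nth_default 0) (partitions s) (partition_seqs M s)"
  by (simp add: bij_betw_def inj_on_nth_default_partitions nth_default_partitions_eq)

lemma finite_partition_seqs: "s \<le> M \<Longrightarrow> finite (partition_seqs M s)"
  using bij_betw_finite[OF bij_betw_nth_default_partitions] finite_partitions by blast

lemma card_partition_seqs: "s \<le> M \<Longrightarrow> card (partition_seqs M s) = part_count s"
  using bij_betw_same_card[OF bij_betw_nth_default_partitions] by (simp add: part_count_def)

lemma partition_seqs_0_le:
  assumes "a \<in> partition_seqs M s"
  shows "a 0 \<le> s"
proof (cases "M = 0")
  case False
  then have "a 0 \<le> (\<Sum>i<M. a i)" by (intro member_le_sum) auto
  with assms show ?thesis by (simp add: partition_seqs_def)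
qed (use assms in \<open>simp add: partition_seqs_def\<close>)

definition adjacent_sums :: "(nat \<Rightarrow> nat) \<Rightarrow> nat \<Rightarrow> nat" where
  "adjacent_sums T i = T i + T (Suc i)"

lemma antimono_adjacent_sums_iff:
  "antimono (adjacent_sums T) \<longleftrightarrow> (\<forall>i. T (Suc (Suc i)) \<le> T i)"
  by (simp add: antimono_iff_le_Suc adjacent_sums_def)

lemma adjacent_sums_inject:
  assumes "\<forall>i\<ge>N. T i = 0" "\<forall>i\<ge>N. T' i = 0" "adjacent_sums T = adjacent_sums T'"
  shows "T = T'"
proof
  fix i show "T i = T' i"
  proof (cases "i \<le> N")
    case True
    then show ?thesis
    proof (induction i rule: inc_induct)
      case base
      then show ?case using assms(1,2) by simp
    next
      case (step n)
      then show ?case using fun_cong[OF assms(3), of n] by (simp add: adjacent_sums_def)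
    qed
  qed (use assms(1,2) in simp)
qed

lemma antimono_ex_adjacent_sums:
  fixes a :: "nat \<Rightarrow> nat"
  assumes "antimono a" "\<forall>i\<ge>N. a i = 0"
  shows "\<exists>T. a = adjacent_sums T \<and> (\<forall>i\<ge>N. T i = 0)"
  using assms
proof (induction N arbitrary: a)
  case 0
  then show ?case by (intro exI[of _ "\<lambda>_. 0"]) (auto simp: adjacent_sums_def)
next
  case (Suc N)
  have "antimono (a \<circ> Suc)" "\<forall>i\<ge>N. (a \<circ> Suc) i = 0"
    using Suc.prems by (auto simp: antimono_iff_le_Suc)
  then obtain T' where T': "a \<circ> Suc = adjacent_sums T'" "\<forall>i\<ge>N. T' i = 0"
    using Suc.IH by blast
  have "T' 0 \<le> a 0"
    using fun_cong[OF T'(1), of 0] antimonoD[OF Suc.prems(1), of 0 1] by (simp add: adjacent_sums_def)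
  then have "a = adjacent_sums (case_nat (a 0 - T' 0) T')"
    using T'(1) by (auto simp: adjacent_sums_def fun_eq_iff split: nat.split)
  moreover have "\<forall>i\<ge>Suc N. case_nat (a 0 - T' 0) T' i = 0"
    using T'(2) by (auto split: nat.split)
  ultimately show ?case by blast
qed

lemma sum_adjacent_sums:
  assumes "T N = 0"
  shows "(\<Sum>i<N. adjacent_sums T i) + T 0 = 2 * (\<Sum>i<N. T i)"
proof -
  have "(\<Sum>i<N. T (Suc i)) + T 0 = (\<Sum>i<Suc N. T i)"
    by (subst sum.lessThan_Suc_shift) simp
  then show ?thesis
    using assms by (simp add: adjacent_sums_def sum.distrib)
qed

lemma sum_odd_adjacent_sums:
  "(\<Sum>i<Suc (2 * M). if odd i then adjacent_sums T i else 0) + T 0 = (\<Sum>i<Suc (2 * M). T i)"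
  by (induction M) (auto simp: adjacent_sums_def)

definition interleave :: "nat \<Rightarrow> (nat \<Rightarrow> nat) \<Rightarrow> (nat \<Rightarrow> nat) \<Rightarrow> nat \<Rightarrow> nat" where
  "interleave t \<alpha> \<beta> i =
     (case i of 0 \<Rightarrow> t | Suc m \<Rightarrow> if even m then \<alpha> (m div 2) else \<beta> (m div 2))"

lemma interleave_simps [simp]:
  "interleave t \<alpha> \<beta> 0 = t"
  "interleave t \<alpha> \<beta> (Suc (2 * k)) = \<alpha> k"
  "interleave t \<alpha> \<beta> (Suc (Suc (2 * k))) = \<beta> k"
  by (simp_all add: interleave_def)

lemma interleave_index_cases:
  fixes i :: nat
  obtains "i = 0" | k where "i = Suc (2 * k)" | k where "i = Suc (Suc (2 * k))"
proof (cases i)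
  case (Suc m)
  then show ?thesis
    using that(2,3) by (cases "even m") (auto elim!: evenE oddE)
qed (use that(1) in simp)

lemma interleave_components:
  "interleave (T 0) (\<lambda>k. T (Suc (2 * k))) (\<lambda>k. T (Suc (Suc (2 * k)))) = T"
proof
  fix i show "interleave (T 0) (\<lambda>k. T (Suc (2 * k))) (\<lambda>k. T (Suc (Suc (2 * k)))) i = T i"
    by (cases i rule: interleave_index_cases) simp_all
qed

lemma interleave_eq_iff:
  "interleave t \<alpha> \<beta> = interleave t' \<alpha>' \<beta>' \<longleftrightarrow> t = t' \<and> \<alpha> = \<alpha>' \<and> \<beta> = \<beta>'"
proof
  assume eq: "interleave t \<alpha> \<beta> = interleave t' \<alpha>' \<beta>'"
  have "\<alpha> k = \<alpha>' k" "\<beta> k = \<beta>' k" for k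
    using fun_cong[OF eq, of "Suc (2 * k)"] fun_cong[OF eq, of "Suc (Suc (2 * k))"] by simp_all
  moreover have "t = t'"
    using fun_cong[OF eq, of 0] by simp
  ultimately show "t = t' \<and> \<alpha> = \<alpha>' \<and> \<beta> = \<beta>'" by auto
qed simp

lemma interleave_Suc_Suc:
  "interleave t \<alpha> \<beta> (Suc (Suc i)) = interleave (\<beta> 0) (\<alpha> \<circ> Suc) (\<beta> \<circ> Suc) i"
  by (simp add: interleave_def split: nat.split)

lemma interleave_step2_antitone_iff:
  "(\<forall>i. interleave t \<alpha> \<beta> (Suc (Suc i)) \<le> interleave t \<alpha> \<beta> i)
    \<longleftrightarrow> antimono \<alpha> \<and> antimono \<beta> \<and> \<beta> 0 \<le> t"
proof
  assume "\<forall>i. interleave t \<alpha> \<beta> (Suc (Suc i)) \<le> interleave t \<alpha> \<beta> i"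
  then have step: "interleave (\<beta> 0) (\<alpha> \<circ> Suc) (\<beta> \<circ> Suc) i \<le> interleave t \<alpha> \<beta> i" for i
    by (simp only: interleave_Suc_Suc)
  have "\<alpha> (Suc k) \<le> \<alpha> k" "\<beta> (Suc k) \<le> \<beta> k" for k
    using step[of "Suc (2 * k)"] step[of "Suc (Suc (2 * k))"] by simp_all
  moreover have "\<beta> 0 \<le> t"
    using step[of 0] by simp
  ultimately show "antimono \<alpha> \<and> antimono \<beta> \<and> \<beta> 0 \<le> t"
    by (simp add: antimono_iff_le_Suc)
next
  assume "antimono \<alpha> \<and> antimono \<beta> \<and> \<beta> 0 \<le> t"
  then have "interleave (\<beta> 0) (\<alpha> \<circ> Suc) (\<beta> \<circ> Suc) i \<le> interleave t \<alpha> \<beta> i" for i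
    by (cases i rule: interleave_index_cases) (simp_all add: antimono_iff_le_Suc)
  then show "\<forall>i. interleave t \<alpha> \<beta> (Suc (Suc i)) \<le> interleave t \<alpha> \<beta> i"
    by (simp only: interleave_Suc_Suc) blast
qed

lemma interleave_vanishing_iff:
  "(\<forall>i\<ge>Suc (2 * M). interleave t \<alpha> \<beta> i = 0)
     \<longleftrightarrow> (\<forall>k\<ge>M. \<alpha> k = 0) \<and> (\<forall>k\<ge>M. \<beta> k = 0)"
proof
  assume "\<forall>i\<ge>Suc (2 * M). interleave t \<alpha> \<beta> i = 0"
  then show "(\<forall>k\<ge>M. \<alpha> k = 0) \<and> (\<forall>k\<ge>M. \<beta> k = 0)"
    by (metis interleave_simps(2,3) le_SucI mult_le_mono2 not_less_eq_eq)
next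
  assume "(\<forall>k\<ge>M. \<alpha> k = 0) \<and> (\<forall>k\<ge>M. \<beta> k = 0)"
  then have "interleave t \<alpha> \<beta> i = 0" if "i \<ge> Suc (2 * M)" for i
    using that by (cases i rule: interleave_index_cases) simp_all
  then show "\<forall>i\<ge>Suc (2 * M). interleave t \<alpha> \<beta> i = 0" by blast
qed

lemma sum_interleave:
  "(\<Sum>i<Suc (2 * M). interleave t \<alpha> \<beta> i) = t + (\<Sum>k<M. \<alpha> k) + (\<Sum>k<M. \<beta> k)"
  by (induction M) simp_all

lemma sum_adjacent_sums_interleave:
  assumes "\<alpha> M = 0"
  shows "(\<Sum>i<Suc (2 * M). adjacent_sums (interleave t \<alpha> \<beta>) i)
           = t + 2 * ((\<Sum>k<M. \<alpha> k) + (\<Sum>k<M. \<beta> k))"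
proof -
  have "interleave t \<alpha> \<beta> (Suc (2 * M)) = 0"
    using assms by simp
  from sum_adjacent_sums[where T = "interleave t \<alpha> \<beta>", OF this] show ?thesis
    by (simp only: sum_interleave interleave_simps(1)) (simp add: distrib_left)
qed

lemma sum_odd_adjacent_sums_interleave:
  "(\<Sum>i<Suc (2 * M). if odd i then adjacent_sums (interleave t \<alpha> \<beta>) i else 0)
     = (\<Sum>k<M. \<alpha> k) + (\<Sum>k<M. \<beta> k)"
  using sum_odd_adjacent_sums[where T = "interleave t \<alpha> \<beta>" and M = M]
  by (simp only: sum_interleave interleave_simps(1))

definition partition_seqs_odd_sum :: "nat \<Rightarrow> nat \<Rightarrow> nat \<Rightarrow> (nat \<Rightarrow> nat) set" where
  "partition_seqs_odd_sum N n j = {a \<in> partition_seqs N n. (\<Sum>i<N. if odd i then a i else 0) = j}"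

definition partition_pairs :: "nat \<Rightarrow> nat \<Rightarrow> ((nat \<Rightarrow> nat) \<times> (nat \<Rightarrow> nat)) set" where
  "partition_pairs M j = (\<Union>i\<le>j. partition_seqs M i \<times> partition_seqs M (j - i))"

lemma partition_pairs_iff:
  "(\<alpha>, \<beta>) \<in> partition_pairs M j \<longleftrightarrow>
     antimono \<alpha> \<and> antimono \<beta> \<and> (\<forall>k\<ge>M. \<alpha> k = 0) \<and> (\<forall>k\<ge>M. \<beta> k = 0)
     \<and> (\<Sum>k<M. \<alpha> k) + (\<Sum>k<M. \<beta> k) = j"
  by (auto simp: partition_pairs_def partition_seqs_def)

lemma card_partition_pairs:
  assumes "j \<le> M"
  shows "card (partition_pairs M j) = (\<Sum>i\<le>j. part_count i * part_count (j - i))"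
proof -
  have "card (partition_pairs M j) = (\<Sum>i\<le>j. card (partition_seqs M i \<times> partition_seqs M (j - i)))"
    unfolding partition_pairs_def
  proof (rule card_UN_disjoint)
    show "\<forall>i\<in>{..j}. finite (partition_seqs M i \<times> partition_seqs M (j - i))"
      using assms by (auto intro!: finite_cartesian_product finite_partition_seqs)
    show "\<forall>i\<in>{..j}. \<forall>i'\<in>{..j}. i \<noteq> i' \<longrightarrow>
        partition_seqs M i \<times> partition_seqs M (j - i) \<inter> partition_seqs M i' \<times> partition_seqs M (j - i') = {}"
      by (auto simp: partition_seqs_def)
  qed simp
  also have "\<dots> = (\<Sum>i\<le>j. part_count i * part_count (j - i))"
    using assms by (intro sum.cong) (auto simp: card_cartesian_product card_partition_seqs)
  finally show ?thesis .
qed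

lemma adjacent_sums_interleave_mem_iff:
  assumes "\<forall>k\<ge>M. \<alpha> k = 0" "\<forall>k\<ge>M. \<beta> k = 0"
  shows "adjacent_sums (interleave t \<alpha> \<beta>) \<in> partition_seqs_odd_sum (Suc (2 * M)) (t + 2 * j) j
     \<longleftrightarrow> (\<alpha>, \<beta>) \<in> partition_pairs M j \<and> \<beta> 0 \<le> t"
proof -
  have "\<forall>i\<ge>Suc (2 * M). interleave t \<alpha> \<beta> i = 0"
    using assms interleave_vanishing_iff by blast
  then have "\<forall>i\<ge>Suc (2 * M). adjacent_sums (interleave t \<alpha> \<beta>) i = 0"
    by (simp add: adjacent_sums_def)
  moreover have "\<alpha> M = 0"
    using assms(1) by simp
  ultimately show ?thesis
    using assms sum_adjacent_sums_interleave sum_odd_adjacent_sums_interleave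
    unfolding partition_seqs_odd_sum_def partition_seqs_def partition_pairs_iff mem_Collect_eq
    by (simp add: antimono_adjacent_sums_iff interleave_step2_antitone_iff) linarith
qed

lemma partition_seqs_odd_sum_interleaveE:
  assumes a: "a \<in> partition_seqs_odd_sum (Suc (2 * M)) (t + 2 * j) j"
  obtains \<alpha> \<beta> where "(\<alpha>, \<beta>) \<in> partition_pairs M j" "\<beta> 0 \<le> t"
    "a = adjacent_sums (interleave t \<alpha> \<beta>)"
proof -
  have "antimono a" "\<forall>i\<ge>Suc (2 * M). a i = 0"
    using a by (simp_all add: partition_seqs_odd_sum_def partition_seqs_def)
  then obtain T where T: "a = adjacent_sums T" "\<forall>i\<ge>Suc (2 * M). T i = 0"
    using antimono_ex_adjacent_sums by blast
  define \<alpha> where "\<alpha> k = T (Suc (2 * k))" for k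
  define \<beta> where "\<beta> k = T (Suc (Suc (2 * k)))" for k
  have T_eq: "interleave (T 0) \<alpha> \<beta> = T"
    unfolding \<alpha>_def \<beta>_def by (rule interleave_components)
  have vanish: "\<forall>k\<ge>M. \<alpha> k = 0" "\<forall>k\<ge>M. \<beta> k = 0"
    using T(2) interleave_vanishing_iff[of M "T 0" \<alpha> \<beta>] by (simp_all add: T_eq)
  then have "\<alpha> M = 0"
    by simp
  from sum_adjacent_sums_interleave[of \<alpha> M "T 0" \<beta>, OF this]
    sum_odd_adjacent_sums_interleave[of "T 0" \<alpha> \<beta> M]
  have "(\<Sum>i<Suc (2 * M). a i) = T 0 + 2 * ((\<Sum>k<M. \<alpha> k) + (\<Sum>k<M. \<beta> k))"
    "(\<Sum>i<Suc (2 * M). if odd i then a i else 0) = (\<Sum>k<M. \<alpha> k) + (\<Sum>k<M. \<beta> k)"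
    by (simp_all only: T(1) T_eq)
  moreover have "(\<Sum>i<Suc (2 * M). a i) = t + 2 * j"
    "(\<Sum>i<Suc (2 * M). if odd i then a i else 0) = j"
    using a by (simp_all only: partition_seqs_odd_sum_def partition_seqs_def mem_Collect_eq)
  ultimately have "T 0 = t"
    by arith
  with T(1) T_eq have "a = adjacent_sums (interleave t \<alpha> \<beta>)"
    by simp
  moreover from this a have "(\<alpha>, \<beta>) \<in> partition_pairs M j \<and> \<beta> 0 \<le> t"
    by (simp only: adjacent_sums_interleave_mem_iff[OF vanish])
  ultimately show ?thesis
    using that by blast
qed

lemma bij_betw_partition_pairs_partition_seqs_odd_sum:
  "bij_betw (\<lambda>(\<alpha>, \<beta>). adjacent_sums (interleave t \<alpha> \<beta>))
     {(\<alpha>, \<beta>) \<in> partition_pairs M j. \<beta> 0 \<le> t} (partition_seqs_odd_sum (Suc (2 * M)) (t + 2 * j) j)"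
  (is "bij_betw ?\<Phi> ?P ?A")
proof (rule bij_betw_imageI)
  show "inj_on ?\<Phi> ?P"
  proof (rule inj_onI, clarify)
    fix \<alpha> \<beta> \<alpha>' \<beta>'
    assume "(\<alpha>, \<beta>) \<in> partition_pairs M j" "(\<alpha>', \<beta>') \<in> partition_pairs M j"
      and eq: "adjacent_sums (interleave t \<alpha> \<beta>) = adjacent_sums (interleave t \<alpha>' \<beta>')"
    then have "\<forall>i\<ge>Suc (2 * M). interleave t \<alpha> \<beta> i = 0"
      "\<forall>i\<ge>Suc (2 * M). interleave t \<alpha>' \<beta>' i = 0"
      by (simp_all add: partition_pairs_iff interleave_vanishing_iff)
    with eq have "interleave t \<alpha> \<beta> = interleave t \<alpha>' \<beta>'"
      by (rule adjacent_sums_inject[rotated -1])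
    then show "\<alpha> = \<alpha>' \<and> \<beta> = \<beta>'"
      by (simp add: interleave_eq_iff)
  qed
  show "?\<Phi> ` ?P = ?A"
  proof
    show "?\<Phi> ` ?P \<subseteq> ?A"
    proof clarify
      fix \<alpha> \<beta> assume "(\<alpha>, \<beta>) \<in> partition_pairs M j" "\<beta> 0 \<le> t"
      moreover from this have "\<forall>k\<ge>M. \<alpha> k = 0" "\<forall>k\<ge>M. \<beta> k = 0"
        by (simp_all add: partition_pairs_iff)
      ultimately show "adjacent_sums (interleave t \<alpha> \<beta>) \<in> ?A"
        by (simp only: adjacent_sums_interleave_mem_iff)
    qed
    show "?A \<subseteq> ?\<Phi> ` ?P"
      by (force elim: partition_seqs_odd_sum_interleaveE)
  qed
qed

lemma f_eq_card_partition_seqs_odd_sum: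
  assumes "n \<le> N"
  shows "f n j = card (partition_seqs_odd_sum N n j)"
proof -
  have "bij_betw (nth_default 0) {xs \<in> partitions n. even_index_sum xs = j}
          {a \<in> partition_seqs N n. (\<Sum>i<N. if odd i then a i else 0) = j}"
    using bij_betw_nth_default_partitions[OF assms]
  proof (rule bij_betw_Collect)
    fix xs assume "xs \<in> partitions n"
    then have "length xs \<le> N"
      using assms partitions_length_le le_trans by blast
    then show "(\<Sum>i<N. if odd i then nth_default 0 xs i else 0) = j \<longleftrightarrow> even_index_sum xs = j"
      by (simp add: even_index_sum_nth_default)
  qed
  then show ?thesis
    unfolding f_def partition_seqs_odd_sum_def by (rule bij_betw_same_card)
qed

lemma f_eq_card_partition_pairs:
  "f (t + 2 * j) j = card {(\<alpha>, \<beta>) \<in> partition_pairs (t + 2 * j) j. \<beta> 0 \<le> t}"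
proof -
  let ?M = "t + 2 * j"
  have "f (t + 2 * j) j = card (partition_seqs_odd_sum (Suc (2 * ?M)) (t + 2 * j) j)"
    by (rule f_eq_card_partition_seqs_odd_sum) simp
  also have "\<dots> = card {(\<alpha>, \<beta>) \<in> partition_pairs ?M j. \<beta> 0 \<le> t}"
    using bij_betw_partition_pairs_partition_seqs_odd_sum by (rule bij_betw_same_card[symmetric])
  finally show ?thesis .
qed

lemma finite_partition_pairs: "j \<le> M \<Longrightarrow> finite (partition_pairs M j)"
  unfolding partition_pairs_def by (auto intro!: finite_cartesian_product finite_partition_seqs)

lemma partition_pairs_snd_0_le: "(\<alpha>, \<beta>) \<in> partition_pairs M j \<Longrightarrow> \<beta> 0 \<le> j"
  unfolding partition_pairs_def using partition_seqs_0_le by fastforce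

lemma single_part_in_partition_pairs:
  "0 < M \<Longrightarrow> (\<lambda>_. 0, \<lambda>k. if k = 0 then j else 0) \<in> partition_pairs M j"
  by (auto simp: partition_pairs_iff antimono_iff_le_Suc)

lemma restricted_partition_pairs_eq:
  "j \<le> t \<Longrightarrow> {(\<alpha>, \<beta>) \<in> partition_pairs M j. \<beta> 0 \<le> t} = partition_pairs M j"
  using partition_pairs_snd_0_le by fastforce

lemma restricted_partition_pairs_psubset:
  assumes "t < j" "0 < M"
  shows "{(\<alpha>, \<beta>) \<in> partition_pairs M j. \<beta> 0 \<le> t} \<subset> partition_pairs M j"
    (is "?restricted \<subset> ?pairs")
proof -
  from assms(2) have "(\<lambda>_. 0, \<lambda>k. if k = 0 then j else 0) \<in> ?pairs"
    by (rule single_part_in_partition_pairs)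
  moreover from assms(1) have "(\<lambda>_. 0, \<lambda>k. if k = 0 then j else 0) \<notin> ?restricted"
    by simp
  ultimately show ?thesis
    by (auto simp only: psubset_eq)
qed

theorem theorem1:
  fixes n j :: nat
  shows "(3 * j \<le> n \<longrightarrow> f n j = (\<Sum>i=0..j. part_count i * part_count (j - i)))
       \<and> (n < 3 * j \<and> 2 * j \<le> n \<longrightarrow> f n j < (\<Sum>i=0..j. part_count i * part_count (j - i)))"
proof -
  define t where "t = n - 2 * j"
  let ?pairs = "partition_pairs n j"
  let ?restricted = "{(\<alpha>, \<beta>) \<in> ?pairs. \<beta> 0 \<le> t}"
  have f_eq: "f n j = card ?restricted" if "2 * j \<le> n"
    using f_eq_card_partition_pairs[of t j] that by (simp add: t_def)
  have card_pairs: "card ?pairs = (\<Sum>i=0..j. part_count i * part_count (j - i))" if "j \<le> n"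
    using card_partition_pairs[OF that] by (simp add: atLeast0AtMost)
  show ?thesis
  proof (intro conjI impI)
    assume "3 * j \<le> n"
    then show "f n j = (\<Sum>i=0..j. part_count i * part_count (j - i))"
      using f_eq card_pairs restricted_partition_pairs_eq[of j t n] by (simp add: t_def)
  next
    assume j: "n < 3 * j \<and> 2 * j \<le> n"
    then have "t < j" "0 < n"
      unfolding t_def by linarith+
    then have "?restricted \<subset> ?pairs"
      by (rule restricted_partition_pairs_psubset)
    then have "card ?restricted < card ?pairs"
      using j by (intro psubset_card_mono finite_partition_pairs) simp
    with j show "f n j < (\<Sum>i=0..j. part_count i * part_count (j - i))"
      using f_eq card_pairs by simp
  qed
qed

end
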